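(* Let $P$ be a natural unit interval order. Then $\mathbb{Q}(t)\otimes I^P_{\mathrm{plac}}\subseteq I^P_T$.
   Context: Write $a<_Pb$ for strict order in the poset $P$ and $a\sim_Pb$ for incomparable or equal. A natural unit interval order is a finite poset $P$ together with a total order $<$ on its underlying set such that (i) $a<_Pb$ implies $a<b$, and (ii) whenever $a\sim_Pb$, $b\sim_Pc$, $a<_Pc$ (with $a,b,c$ distinct), one has $a<b<c$. $\mathcal{U}_P=\mathbb{Z}\langle u_a:a\in P\rangle$. $I^P_{\mathrm{plac}}$ is the two-sided ideal of $\mathcal{U}_P$ generated by: $u_bu_au_c-u_bu_cu_a$ when $a<_Pb$, $c\not<_Pb$, $a<_Pc$; $u_cu_au_b-u_au_cu_b$ when $b\not<_Pa$, $b<_Pc$, $a<_Pc$; $u_cu_au_b-u_bu_cu_a$ when $a\sim_Pb$, $b\sim_Pc$, $a<_Pc$. $I^P_T$ is the two-sided ideal of $\mathbb{Q}(t)\otimes_{\mathbb{Z}}\mathcal{U}_P$ generated by $u_cu_a-u_au_c$ for $a<_Pc$, and $u_bu_a-t\,u_au_b$ for $a<b$ with $a\sim_Pb$. *)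

theory Defs
  imports "HOL-Computational_Algebra.Polynomial" "HOL-Computational_Algebra.Fraction_Field"
begin

text \<open>Noncommutative polynomials in variables indexed by 'a with coefficients in 'c,
  represented as coefficient functions on words (lists of letters).
  Genuine polynomials are those with finite support.\<close>

type_synonym ('a, 'c) ncpoly = "'a list \<Rightarrow> 'c"

definition ncfin :: "('a, 'c::zero) ncpoly \<Rightarrow> bool" where
  "ncfin p \<longleftrightarrow> finite {w. p w \<noteq> 0}"

definition ncmul :: "('a, 'c::semiring_0) ncpoly \<Rightarrow> ('a, 'c) ncpoly \<Rightarrow> ('a, 'c) ncpoly" where
  "ncmul p q = (\<lambda>w. \<Sum>i\<le>length w. p (take i w) * q (drop i w))"

definition ncadd :: "('a, 'c::plus) ncpoly \<Rightarrow> ('a, 'c) ncpoly \<Rightarrow> ('a, 'c) ncpoly" where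
  "ncadd p q = (\<lambda>w. p w + q w)"

definition ncsub :: "('a, 'c::minus) ncpoly \<Rightarrow> ('a, 'c) ncpoly \<Rightarrow> ('a, 'c) ncpoly" where
  "ncsub p q = (\<lambda>w. p w - q w)"

definition ncsmult :: "'c::times \<Rightarrow> ('a, 'c) ncpoly \<Rightarrow> ('a, 'c) ncpoly" where
  "ncsmult c p = (\<lambda>w. c * p w)"

definition ncvar :: "'a \<Rightarrow> ('a, 'c::{zero,one}) ncpoly" where
  "ncvar a = (\<lambda>w. if w = [a] then 1 else 0)"

definition ncmap :: "('c \<Rightarrow> 'd) \<Rightarrow> ('a, 'c) ncpoly \<Rightarrow> ('a, 'd) ncpoly" where
  "ncmap f p = (\<lambda>w. f (p w))"

inductive_set ncideal :: "('a, 'c::comm_ring_1) ncpoly set \<Rightarrow> ('a, 'c) ncpoly set"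
  for G where
  zero: "(\<lambda>w. 0) \<in> ncideal G"
| gen: "g \<in> G \<Longrightarrow> g \<in> ncideal G"
| add: "x \<in> ncideal G \<Longrightarrow> y \<in> ncideal G \<Longrightarrow> ncadd x y \<in> ncideal G"
| mult_left: "ncfin r \<Longrightarrow> x \<in> ncideal G \<Longrightarrow> ncmul r x \<in> ncideal G"
| mult_right: "ncfin r \<Longrightarrow> x \<in> ncideal G \<Longrightarrow> ncmul x r \<in> ncideal G"

text \<open>Natural unit interval order: a poset (strict order lessP) on the finite
  type 'a, together with the total order < of 'a.\<close>
definition incomp :: "('a \<Rightarrow> 'a \<Rightarrow> bool) \<Rightarrow> 'a \<Rightarrow> 'a \<Rightarrow> bool" where
  "incomp lessP a b \<longleftrightarrow> \<not> lessP a b \<and> \<not> lessP b a"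

definition natural_unit_interval_order :: "('a::{finite,linorder} \<Rightarrow> 'a \<Rightarrow> bool) \<Rightarrow> bool" where
  "natural_unit_interval_order lessP \<longleftrightarrow>
     (\<forall>a. \<not> lessP a a) \<and>
     (\<forall>a b c. lessP a b \<longrightarrow> lessP b c \<longrightarrow> lessP a c) \<and>
     (\<forall>a b. lessP a b \<longrightarrow> a < b) \<and>
     (\<forall>a b c. a \<noteq> b \<longrightarrow> b \<noteq> c \<longrightarrow> a \<noteq> c \<longrightarrow>
        incomp lessP a b \<longrightarrow> incomp lessP b c \<longrightarrow> lessP a c \<longrightarrow> a < b \<and> b < c)"

abbreviation mon3 :: "'a \<Rightarrow> 'a \<Rightarrow> 'a \<Rightarrow> ('a, 'c::comm_ring_1) ncpoly" where
  "mon3 x y z \<equiv> ncmul (ncmul (ncvar x) (ncvar y)) (ncvar z)"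

abbreviation mon2 :: "'a \<Rightarrow> 'a \<Rightarrow> ('a, 'c::comm_ring_1) ncpoly" where
  "mon2 x y \<equiv> ncmul (ncvar x) (ncvar y)"

definition plac_gens :: "('a \<Rightarrow> 'a \<Rightarrow> bool) \<Rightarrow> ('a, int) ncpoly set" where
  "plac_gens lessP =
     {ncsub (mon3 b a c) (mon3 b c a) | a b c. lessP a b \<and> \<not> lessP c b \<and> lessP a c}
   \<union> {ncsub (mon3 c a b) (mon3 a c b) | a b c. \<not> lessP b a \<and> lessP b c \<and> lessP a c}
   \<union> {ncsub (mon3 c a b) (mon3 b c a) | a b c.
        incomp lessP a b \<and> incomp lessP b c \<and> lessP a c}"

definition I_plac :: "('a \<Rightarrow> 'a \<Rightarrow> bool) \<Rightarrow> ('a, int) ncpoly set" where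
  "I_plac lessP = ncideal (plac_gens lessP)"

type_synonym qt = "rat poly fract"

definition tvar :: qt where
  "tvar = Fract [:0, 1:] 1"

definition T_gens :: "('a::linorder \<Rightarrow> 'a \<Rightarrow> bool) \<Rightarrow> ('a, qt) ncpoly set" where
  "T_gens lessP =
     {ncsub (mon2 c a) (mon2 a c) | a c. lessP a c}
   \<union> {ncsub (mon2 b a) (ncsmult tvar (mon2 a b)) | a b. a < b \<and> incomp lessP a b}"

definition I_T :: "('a::linorder \<Rightarrow> 'a \<Rightarrow> bool) \<Rightarrow> ('a, qt) ncpoly set" where
  "I_T lessP = ncideal (T_gens lessP)"

end

theory Submission
  imports Defs
begin

text \<open>Each placactic generator is congruent to zero modulo \<open>I_T\<close> by a short chain of
  elementary moves. Generators of the first two kinds are a commutation \<open>u\<^sub>c u\<^sub>a \<equiv> u\<^sub>a u\<^sub>c\<close>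
  (for \<open>a <\<^sub>P c\<close>) multiplied by a letter on one side, and so is the third kind when two of
  \<open>a, b, c\<close> coincide. Otherwise the unit interval axiom forces \<open>a < b < c\<close>, and
  \<open>u\<^sub>c u\<^sub>a u\<^sub>b \<equiv> u\<^sub>a u\<^sub>c u\<^sub>b \<equiv> t u\<^sub>a u\<^sub>b u\<^sub>c \<equiv> u\<^sub>b u\<^sub>a u\<^sub>c \<equiv> u\<^sub>b u\<^sub>c u\<^sub>a\<close>,
  where the two middle steps use the \<open>t\<close>-commutations of the incomparable pairs
  \<open>(b, c)\<close> and \<open>(a, b)\<close>, which cancel each other.\<close>

definition ncmonom :: "'a list \<Rightarrow> ('a, 'c::{zero,one}) ncpoly" where
  "ncmonom u = (\<lambda>w. if w = u then 1 else 0)"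

lemma ncvar_eq_ncmonom: "ncvar a = ncmonom [a]"
  by (simp add: ncvar_def ncmonom_def)

lemma ncfin_ncmonom: "ncfin (ncmonom u)"
proof -
  have "{w. ncmonom u w \<noteq> 0} \<subseteq> {u}" by (auto simp: ncmonom_def)
  then show ?thesis unfolding ncfin_def using finite_subset by blast
qed

lemma take_drop_eq_iff:
  assumes "i \<le> length w"
  shows "take i w = u \<and> drop i w = v \<longleftrightarrow> i = length u \<and> w = u @ v"
proof
  assume "take i w = u \<and> drop i w = v"
  then show "i = length u \<and> w = u @ v"
    using assms by (metis append_take_drop_id length_take min_absorb2)
qed (simp)

lemma ncmul_ncmonom: "ncmul (ncmonom u) (ncmonom v) = (ncmonom (u @ v) :: ('a, 'c::semiring_1) ncpoly)"
proof
  fix w :: "'a list"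
  have "ncmul (ncmonom u) (ncmonom v) w
      = (\<Sum>i\<le>length w. if w = u @ v then (if i = length u then 1 else 0) else (0::'c))"
    unfolding ncmul_def ncmonom_def
  proof (rule sum.cong)
    fix i assume "i \<in> {..length w}"
    then have "take i w = u \<and> drop i w = v \<longleftrightarrow> i = length u \<and> w = u @ v"
      by (simp add: take_drop_eq_iff)
    then show "(if take i w = u then 1 else 0) * (if drop i w = v then 1 else 0)
        = (if w = u @ v then (if i = length u then 1 else 0) else (0::'c))"
      by (cases "take i w = u"; cases "drop i w = v") auto
  qed simp
  also have "\<dots> = ncmonom (u @ v) w"
    by (simp add: ncmonom_def)
  finally show "ncmul (ncmonom u) (ncmonom v) w = (ncmonom (u @ v) w :: 'c)" .
qed

lemma ncmul_ncmonom_Nil: "ncmul (ncmonom []) p = (p :: ('a, 'c::semiring_1) ncpoly)"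
proof
  fix w :: "'a list"
  have "ncmul (ncmonom []) p w = (\<Sum>i\<le>length w. if i = 0 then p w else 0)"
    unfolding ncmul_def ncmonom_def by (rule sum.cong) auto
  then show "ncmul (ncmonom []) p w = p w" by simp
qed

lemma ncmul_ncsub_right: "ncmul r (ncsub p q) = ncsub (ncmul r p) (ncmul r (q :: ('a, 'c::ring) ncpoly))"
  by (simp add: ncmul_def ncsub_def fun_eq_iff algebra_simps sum_subtractf)

lemma ncmul_ncsub_left: "ncmul (ncsub p q) r = ncsub (ncmul p r) (ncmul (q :: ('a, 'c::ring) ncpoly) r)"
  by (simp add: ncmul_def ncsub_def fun_eq_iff algebra_simps sum_subtractf)

lemma ncmul_ncsmult_left: "ncmul (ncsmult c p) q = ncsmult c (ncmul p (q :: ('a, 'c::comm_semiring_0) ncpoly))"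
  by (simp add: ncmul_def ncsmult_def fun_eq_iff sum_distrib_left mult.assoc)

lemma ncmul_ncsmult_right: "ncmul p (ncsmult c q) = ncsmult c (ncmul p (q :: ('a, 'c::comm_semiring_0) ncpoly))"
  by (simp add: ncmul_def ncsmult_def fun_eq_iff sum_distrib_left mult.left_commute)

lemma ncsmult_one: "ncsmult 1 p = (p :: ('a, 'c::monoid_mult) ncpoly)"
  by (simp add: ncsmult_def)

lemma ncideal_ncsmult:
  fixes p :: "('a, 'c::comm_ring_1) ncpoly"
  assumes "p \<in> ncideal G"
  shows "ncsmult c p \<in> ncideal G"
proof -
  have "{w. ncsmult c (ncmonom []) w \<noteq> (0::'c)} \<subseteq> {[]}"
    by (auto simp: ncsmult_def ncmonom_def)
  then have "ncfin (ncsmult c (ncmonom []) :: ('a, 'c) ncpoly)"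
    unfolding ncfin_def by (rule finite_subset) simp
  from ncideal.mult_left[OF this assms] show ?thesis
    by (simp add: ncmul_ncsmult_left ncmul_ncmonom_Nil)
qed

definition ncmodeq :: "('a, 'c::comm_ring_1) ncpoly set \<Rightarrow> ('a, 'c) ncpoly \<Rightarrow> ('a, 'c) ncpoly \<Rightarrow> bool" where
  "ncmodeq G p q \<longleftrightarrow> ncsub p q \<in> ncideal G"

lemma ncmodeq_gen: "ncsub p q \<in> G \<Longrightarrow> ncmodeq G p q"
  by (simp add: ncmodeq_def ncideal.gen)

lemma ncmodeq_sym: "ncmodeq G p q \<Longrightarrow> ncmodeq G q p"
  unfolding ncmodeq_def
  by (drule ncideal_ncsmult[where c = "-1"]) (simp add: ncsub_def ncsmult_def fun_eq_iff)

lemma ncmodeq_trans [trans]: "ncmodeq G p q \<Longrightarrow> ncmodeq G q r \<Longrightarrow> ncmodeq G p r"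
  unfolding ncmodeq_def by (drule (1) ncideal.add) (simp add: ncadd_def ncsub_def)

lemma ncmodeq_mult_left: "ncfin r \<Longrightarrow> ncmodeq G p q \<Longrightarrow> ncmodeq G (ncmul r p) (ncmul r q)"
  unfolding ncmodeq_def ncmul_ncsub_right[symmetric] by (rule ncideal.mult_left)

lemma ncmodeq_mult_right: "ncfin r \<Longrightarrow> ncmodeq G p q \<Longrightarrow> ncmodeq G (ncmul p r) (ncmul q r)"
  unfolding ncmodeq_def ncmul_ncsub_left[symmetric] by (rule ncideal.mult_right)

lemma ncmodeq_cons:
  "ncmodeq G (ncmonom u) (ncsmult c (ncmonom v))
    \<Longrightarrow> ncmodeq G (ncmonom (a # u)) (ncsmult c (ncmonom (a # v)))"
  by (drule ncmodeq_mult_left[OF ncfin_ncmonom[of "[a]"]])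
    (simp add: ncmul_ncmonom ncmul_ncsmult_right)

lemma ncmodeq_snoc:
  "ncmodeq G (ncmonom u) (ncsmult c (ncmonom v))
    \<Longrightarrow> ncmodeq G (ncmonom (u @ [a])) (ncsmult c (ncmonom (v @ [a])))"
  by (drule ncmodeq_mult_right[OF ncfin_ncmonom[of "[a]"]])
    (simp add: ncmul_ncmonom ncmul_ncsmult_left)

lemma ncmap_of_int_ncmul:
  "ncmap (of_int :: int \<Rightarrow> 'c::comm_ring_1) (ncmul p q) = ncmul (ncmap of_int p) (ncmap of_int q)"
  by (simp add: ncmap_def ncmul_def fun_eq_iff)

lemma ncmap_of_int_ncadd:
  "ncmap (of_int :: int \<Rightarrow> 'c::comm_ring_1) (ncadd p q) = ncadd (ncmap of_int p) (ncmap of_int q)"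
  by (simp add: ncmap_def ncadd_def)

lemma ncmap_of_int_ncsub:
  "ncmap (of_int :: int \<Rightarrow> 'c::comm_ring_1) (ncsub p q) = ncsub (ncmap of_int p) (ncmap of_int q)"
  by (simp add: ncmap_def ncsub_def)

lemma ncmap_of_int_ncmonom: "ncmap (of_int :: int \<Rightarrow> 'c::comm_ring_1) (ncmonom u) = ncmonom u"
  by (simp add: ncmap_def ncmonom_def fun_eq_iff)

lemma ncfin_ncmap_of_int: "ncfin r \<Longrightarrow> ncfin (ncmap (of_int :: int \<Rightarrow> 'c::comm_ring_1) r)"
  unfolding ncfin_def ncmap_def by (erule rev_finite_subset) auto

lemma ncmap_of_int_ncideal:
  fixes H :: "('a, 'c::comm_ring_1) ncpoly set"
  assumes "ncmap (of_int :: int \<Rightarrow> 'c) ` G \<subseteq> ncideal H"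
  shows "ncmap (of_int :: int \<Rightarrow> 'c) ` ncideal G \<subseteq> ncideal H"
proof
  fix y :: "('a, 'c) ncpoly"
  assume "y \<in> ncmap of_int ` ncideal G"
  then obtain x where x: "x \<in> ncideal G" and y: "y = ncmap of_int x" by blast
  from x show "y \<in> ncideal H" unfolding y
  proof induct
    case zero
    show ?case by (simp add: ncmap_def ncideal.zero)
  next
    case (gen g)
    then show ?case using assms by blast
  next
    case (add x y)
    then show ?case by (simp add: ncmap_of_int_ncadd ncideal.add)
  next
    case (mult_left r x)
    then show ?case by (simp add: ncmap_of_int_ncmul ncideal.mult_left ncfin_ncmap_of_int)
  next
    case (mult_right r x)
    then show ?case by (simp add: ncmap_of_int_ncmul ncideal.mult_right ncfin_ncmap_of_int)
  qed
qed

lemma T_commute: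
  "lessP a c \<Longrightarrow> ncmodeq (T_gens lessP) (ncmonom [c, a]) (ncsmult 1 (ncmonom [a, c]))"
  by (rule ncmodeq_gen) (auto simp: T_gens_def ncsmult_one ncvar_eq_ncmonom ncmul_ncmonom)

lemma T_tcommute:
  "a < b \<Longrightarrow> incomp lessP a b \<Longrightarrow>
    ncmodeq (T_gens lessP) (ncmonom [b, a]) (ncsmult tvar (ncmonom [a, b]))"
  by (rule ncmodeq_gen) (auto simp: T_gens_def ncvar_eq_ncmonom ncmul_ncmonom)

lemma T_plac_distinct:
  assumes "a < b" "b < c" "lessP a c" "incomp lessP a b" "incomp lessP b c"
  shows "ncmodeq (T_gens lessP) (ncmonom [c, a, b]) (ncmonom [b, c, a])"
proof -
  let ?G = "T_gens lessP"
  have "ncmodeq ?G (ncmonom [c, a, b]) (ncmonom [a, c, b])"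
    using ncmodeq_snoc[OF T_commute[where lessP = lessP, OF assms(3)]] by (simp add: ncsmult_one)
  also have "ncmodeq ?G \<dots> (ncsmult tvar (ncmonom [a, b, c]))"
    using ncmodeq_cons[OF T_tcommute[where lessP = lessP, OF assms(2,5)]] by simp
  also have "ncmodeq ?G \<dots> (ncmonom [b, a, c])"
    using ncmodeq_sym[OF ncmodeq_snoc[OF T_tcommute[where lessP = lessP, OF assms(1,4)]]] by simp
  also have "ncmodeq ?G \<dots> (ncmonom [b, c, a])"
    using ncmodeq_sym[OF ncmodeq_cons[OF T_commute[where lessP = lessP, OF assms(3)]]]
    by (simp add: ncsmult_one)
  finally show ?thesis .
qed

lemma T_plac:
  assumes nuio: "natural_unit_interval_order lessP"
    and "g \<in> plac_gens lessP"
  shows "ncmap (of_int :: int \<Rightarrow> qt) g \<in> I_T lessP"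
proof -
  have mon3: "mon3 x y z = ncmonom [x, y, z]" for x y z :: 'a
    by (simp add: ncvar_eq_ncmonom ncmul_ncmonom)
  have binom: "ncmap (of_int :: int \<Rightarrow> qt) (ncsub (mon3 x y z) (mon3 x' y' z')) \<in> I_T lessP"
    if "ncmodeq (T_gens lessP) (ncmonom [x, y, z]) (ncmonom [x', y', z'])" for x y z x' y' z'
    using that by (simp add: mon3 I_T_def ncmodeq_def ncmap_of_int_ncsub ncmap_of_int_ncmonom)
  have left: "ncmodeq (T_gens lessP) (ncmonom [b, c, a]) (ncmonom [b, a, c])"
    and right: "ncmodeq (T_gens lessP) (ncmonom [c, a, b]) (ncmonom [a, c, b])"
    if "lessP a c" for a b c
    using ncmodeq_cons[OF T_commute[where lessP = lessP, OF that]]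
      ncmodeq_snoc[OF T_commute[where lessP = lessP, OF that]]
    by (simp_all add: ncsmult_one)
  from assms(2) consider
      (bac) a b c where "g = ncsub (mon3 b a c) (mon3 b c a)" "lessP a c"
    | (cab) a b c where "g = ncsub (mon3 c a b) (mon3 a c b)" "lessP a c"
    | (incomp) a b c where "g = ncsub (mon3 c a b) (mon3 b c a)"
        "incomp lessP a b" "incomp lessP b c" "lessP a c"
    unfolding plac_gens_def by blast
  then show ?thesis
  proof cases
    case bac
    then show ?thesis using binom ncmodeq_sym[OF left] by simp
  next
    case cab
    then show ?thesis using binom right by simp
  next
    case (incomp a b c)
    have "\<not> lessP a a" using nuio by (simp add: natural_unit_interval_order_def)
    then have "a \<noteq> c" using incomp(4) by auto
    then consider "a = b" | "b = c" | "a < b" "b < c"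
      using nuio incomp(2-4) unfolding natural_unit_interval_order_def by blast
    then show ?thesis
    proof cases
      case 1
      then show ?thesis using incomp(1) binom[OF right[OF incomp(4)]] by simp
    next
      case 2
      then show ?thesis using incomp(1) binom[OF ncmodeq_sym[OF left[OF incomp(4)]]] by simp
    next
      case 3
      then show ?thesis using incomp binom[OF T_plac_distinct] by simp
    qed
  qed
qed

theorem mainTheorem5:
  fixes lessP :: "'a::{finite,linorder} \<Rightarrow> 'a \<Rightarrow> bool"
  assumes "natural_unit_interval_order lessP"
  shows "ncmap (of_int :: int \<Rightarrow> qt) ` I_plac lessP \<subseteq> I_T lessP"
  unfolding I_plac_def I_T_def
  by (rule ncmap_of_int_ncideal) (use T_plac[OF assms] in \<open>auto simp: I_T_def\<close>)

end
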